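(* Let $H\in(\tfrac12,1)$, $\beta\in(1-2H,1]$, $\tau=T/M$, $t_i=i\tau$, and fix $m\in\{1,\dots,M\}$. With $R(z)=(1+z)^{-1}$ set $\mathcal T_N(i):=E_N(t_m-t_i)-R(\tau A_N)^{m-i}$ for $i=0,\dots,m-1$. Then there is a constant $C$ independent of $N,M,m$ and $x$ such that for all $x\in V$, $$\sum_{i,j=0}^{m-1}\int_{t_j}^{t_{j+1}}\int_{t_i}^{t_{i+1}}\big\langle\mathcal T_N(i)P_Nx,\;\mathcal T_N(j)P_Nx\big\rangle\,\phi(u-v)\,\mathrm du\,\mathrm dv\le C\,\tau^{2H+\beta-1}\|A_N^{\frac{\beta-1}{2}}P_Nx\|^2 .$$
   Context: $(V,\langle\cdot,\cdot\rangle,\|\cdot\|)$ is a real separable Hilbert space; $A$ is a linear, densely defined, positive self-adjoint unbounded operator with compact inverse, orthonormal eigenbasis $(e_i)$, $Ae_i=\lambda_ie_i$, $0<\lambda_1\le\lambda_2\le\dots\to\infty$. $P_N$ is the orthogonal projection onto $\mathrm{span}\{e_1,\dots,e_N\}$, $A_N=AP_N$ (with fractional powers taken on $\mathrm{span}\{e_1,\dots,e_N\}$), $E_N(t)=e^{-tA_N}$, and $R(\tau A_N)=(I+\tau A_N)^{-1}$. $\phi(y)=H(2H-1)|y|^{2H-2}$. *)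

theory Defs
  imports "HOL-Analysis.Analysis"
begin

text \<open>The operator A is represented by its spectral data: an orthonormal basis
  e 0, e 1, ... (0-based: e k is the paper's e_(k+1)) and eigenvalues lam k.\<close>

definition PN :: "(nat \<Rightarrow> 'a::real_inner) \<Rightarrow> nat \<Rightarrow> 'a \<Rightarrow> 'a" where
  "PN e N y = (\<Sum>k<N. inner y (e k) *\<^sub>R e k)"

text \<open>E_N(t) = exp(-t A_N), with A_N = A P_N (so E_N is the identity on the complement).\<close>
definition EN :: "(nat \<Rightarrow> real) \<Rightarrow> (nat \<Rightarrow> 'a::real_inner) \<Rightarrow> nat \<Rightarrow> real \<Rightarrow> 'a \<Rightarrow> 'a" where
  "EN lam e N t y = y - PN e N y + (\<Sum>k<N. (exp (- t * lam k) * inner y (e k)) *\<^sub>R e k)"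

definition RN :: "(nat \<Rightarrow> real) \<Rightarrow> (nat \<Rightarrow> 'a::real_inner) \<Rightarrow> nat \<Rightarrow> real \<Rightarrow> 'a \<Rightarrow> 'a" where
  "RN lam e N \<tau> y = y - PN e N y + (\<Sum>k<N. (inner y (e k) / (1 + \<tau> * lam k)) *\<^sub>R e k)"

definition AN_pow :: "(nat \<Rightarrow> real) \<Rightarrow> (nat \<Rightarrow> 'a::real_inner) \<Rightarrow> nat \<Rightarrow> real \<Rightarrow> 'a \<Rightarrow> 'a" where
  "AN_pow lam e N s y = (\<Sum>k<N. (lam k powr s * inner y (e k)) *\<^sub>R e k)"

definition phi :: "real \<Rightarrow> real \<Rightarrow> real" where
  "phi H y = H * (2 * H - 1) * \<bar>y\<bar> powr (2 * H - 2)"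

definition TN :: "(nat \<Rightarrow> real) \<Rightarrow> (nat \<Rightarrow> 'a::real_inner) \<Rightarrow> nat \<Rightarrow> real \<Rightarrow> nat \<Rightarrow> nat \<Rightarrow> 'a \<Rightarrow> 'a" where
  "TN lam e N \<tau> m i y = EN lam e N (real m * \<tau> - real i * \<tau>) y - (RN lam e N \<tau> ^^ (m - i)) y"

end

theory Submission
  imports Defs
begin

text \<open>All operators are diagonal in the eigenbasis: on the \<open>k\<close>-th mode the \<open>i\<close>-th error
  operator is multiplication by \<open>exp (- z) ^ n - 1 / (1 + z) ^ n\<close> with \<open>z = \<tau> \<lambda>\<^sub>k\<close>
  and \<open>n = m - i\<close>. Since \<open>|u - v| powr (2H - 2)\<close> is integrable, each cell integral of
  \<open>\<phi>\<close> is at most \<open>H (2H + 1) \<tau> powr (2H)\<close>; this reduces the claim to bounding the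
  square of the \<open>\<ell>\<^sup>1\<close>-norm over \<open>n\<close> of the scalar errors by \<open>z powr (\<beta> - 1)\<close>. That
  \<open>\<ell>\<^sup>1\<close>-norm is at most \<open>min 1 (1/z)\<close>, and \<open>min 1 (1/z)\<^sup>2 \<le> z powr (\<beta> - 1)\<close> as
  \<open>-1 \<le> \<beta> \<le> 1\<close>. The estimate is mode by mode.\<close>

lemma integral_powr_Icc_0:
  fixes p t :: real
  assumes p: "-1 < p" and t: "0 \<le> t"
  shows "integrable lborel (\<lambda>w. indicator {0..t} w * w powr p)"
    and "(LINT w|lborel. indicator {0..t} w * w powr p) = t powr (p + 1) / (p + 1)"
proof -
  have has_int: "((\<lambda>w. w powr p) has_integral (t powr (p + 1) / (p + 1))) {0..t}"
    by (rule has_integral_powr_from_0[OF p t])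
  have nn: "(\<integral>\<^sup>+w. ennreal (indicator {0..t} w * w powr p) \<partial>lborel)
      = ennreal (t powr (p + 1) / (p + 1))"
    using nn_integral_has_integral_lebesgue[OF _ has_int] by simp
  have meas: "(\<lambda>w. indicator {0..t} w * w powr p :: real) \<in> borel_measurable lborel"
    by measurable
  have nonneg: "AE w in lborel. 0 \<le> indicator {0..t} w * w powr p"
    by (auto simp: indicator_def)
  show "integrable lborel (\<lambda>w. indicator {0..t} w * w powr p)"
    by (rule integrableI_nn_integral_finite[OF meas nonneg nn])
  show "(LINT w|lborel. indicator {0..t} w * w powr p) = t powr (p + 1) / (p + 1)"
    using integral_eq_nn_integral[OF meas nonneg] nn p by simp
qed

lemma integral_abs_powr_window:
  fixes p t v :: real
  assumes p: "-1 < p" and t: "0 \<le> t"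
  defines "h \<equiv> \<lambda>u. indicator {0..t} (u - v) * (u - v) powr p
                   + indicator {0..t} (v - u) * (v - u) powr p"
  shows "integrable lborel h" and "(LINT u|lborel. h u) = 2 * (t powr (p + 1) / (p + 1))"
proof -
  let ?Q = "\<lambda>w. indicator {0..t} w * w powr p :: real"
  have int_right: "integrable lborel (\<lambda>u. ?Q (- v + 1 * u))"
    and int_left: "integrable lborel (\<lambda>u. ?Q (v + (-1) * u))"
    by (rule lborel_integrable_real_affine[OF integral_powr_Icc_0(1)[OF p t]]; simp)+
  have "(LINT u|lborel. ?Q (- v + 1 * u)) = t powr (p + 1) / (p + 1)"
    and "(LINT u|lborel. ?Q (v + (-1) * u)) = t powr (p + 1) / (p + 1)"
    using lborel_integral_real_affine[of 1 ?Q "-v"] lborel_integral_real_affine[of "-1" ?Q v]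
      integral_powr_Icc_0(2)[OF p t] by simp_all
  moreover have "h = (\<lambda>u. ?Q (- v + 1 * u) + ?Q (v + (-1) * u))"
    by (auto simp: h_def)
  ultimately show "integrable lborel h" "(LINT u|lborel. h u) = 2 * (t powr (p + 1) / (p + 1))"
    using int_right int_left by simp_all
qed

lemma abs_powr_le_window:
  fixes p t d :: real
  assumes p: "p \<le> 0" and t: "0 < t"
  shows "\<bar>d\<bar> powr p \<le> indicator {0..t} d * d powr p + indicator {0..t} (- d) * (- d) powr p
                        + t powr p"
proof (cases "\<bar>d\<bar> \<le> t")
  case True
  then show ?thesis by (cases "0 \<le> d") (auto simp: indicator_def)
next
  case False
  then have "\<bar>d\<bar> powr p \<le> t powr p" using p t by (intro powr_mono2') auto
  then show ?thesis by (auto simp: indicator_def)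
qed

lemma abs_interval_integral_le:
  fixes F :: "real \<Rightarrow> real"
  assumes ab: "a \<le> b" and F: "\<And>v. \<bar>F v\<bar> \<le> B"
  shows "\<bar>LBINT v=a..b. F v\<bar> \<le> B * (b - a)"
proof -
  have B: "0 \<le> B" using F[of 0] by simp
  have "(LBINT v=a..b. F v) = (LINT v|lborel. indicator {a<..<b} v * F v)"
    using ab by (simp add: interval_lebesgue_integral_def set_lebesgue_integral_def)
  also have "\<bar>\<dots>\<bar> \<le> (LINT v|lborel. norm (indicator {a<..<b} v * F v))"
    using integral_norm_bound[of lborel "\<lambda>v. indicator {a<..<b} v * F v"] by simp
  also have "\<dots> \<le> (LINT v|lborel. B * indicator {a<..<b} v)"
    using ab F B
    by (intro integral_mono_AE' integrable_mult_right integrable_real_indicator AE_I2)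
      (auto simp: emeasure_lborel_Ioo indicator_def)
  also have "\<dots> = B * (b - a)" using ab by simp
  finally show ?thesis .
qed

lemma interval_integral_abs_powr_le:
  fixes p a b \<tau> v :: real
  assumes p: "-1 < p" "p \<le> 0" and ab: "a \<le> b" "b - a \<le> \<tau>" and \<tau>: "0 < \<tau>"
  shows "\<bar>LBINT u=a..b. \<bar>u - v\<bar> powr p\<bar> \<le> (2 / (p + 1) + 1) * \<tau> powr (p + 1)"
proof -
  define h where "h \<equiv> \<lambda>u. indicator {0..\<tau>} (u - v) * (u - v) powr p
                          + indicator {0..\<tau>} (v - u) * (v - u) powr p :: real"
  have h_int: "integrable lborel h" and h_eq: "(LINT u|lborel. h u) = 2 * (\<tau> powr (p + 1) / (p + 1))"
    using integral_abs_powr_window[OF p(1), of \<tau> v] \<tau> unfolding h_def by auto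
  have h_nonneg: "0 \<le> h u" for u by (auto simp: h_def indicator_def)
  have "(LBINT u=a..b. \<bar>u - v\<bar> powr p) = (LINT u|lborel. indicator {a<..<b} u * \<bar>u - v\<bar> powr p)"
    using ab by (simp add: interval_lebesgue_integral_def set_lebesgue_integral_def)
  also have "\<bar>\<dots>\<bar> \<le> (LINT u|lborel. h u + \<tau> powr p * indicator {a<..<b} u)"
  proof -
    have "\<bar>u - v\<bar> powr p \<le> h u + \<tau> powr p" for u
      using abs_powr_le_window[OF p(2) \<tau>, of "u - v"] by (simp add: h_def)
    then have pointwise: "indicator {a<..<b} u * \<bar>u - v\<bar> powr p
        \<le> h u + \<tau> powr p * indicator {a<..<b} u" for u
      using h_nonneg[of u] by (auto simp: indicator_def)
    have "integrable lborel (\<lambda>u. h u + \<tau> powr p * indicator {a<..<b} u)"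
      using h_int ab by (intro Bochner_Integration.integrable_add integrable_mult_right
          integrable_real_indicator) (auto simp: emeasure_lborel_Ioo)
    moreover have "0 \<le> (LINT u|lborel. indicator {a<..<b} u * \<bar>u - v\<bar> powr p)"
      by (intro integral_nonneg_AE) (auto simp: indicator_def)
    moreover have "0 \<le> h u + \<tau> powr p * indicator {a<..<b} u" for u
      using h_nonneg[of u] by simp
    ultimately show ?thesis
      by (subst abs_of_nonneg) (auto intro!: integral_mono_AE' AE_I2 pointwise)
  qed
  also have "\<dots> = 2 * (\<tau> powr (p + 1) / (p + 1)) + \<tau> powr p * (b - a)"
    using h_int h_eq ab by (simp add: integral_add emeasure_lborel_Ioo)
  also have "\<dots> \<le> 2 * (\<tau> powr (p + 1) / (p + 1)) + \<tau> powr p * \<tau>"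
    using ab by (intro add_left_mono mult_left_mono) auto
  also have "\<dots> = (2 / (p + 1) + 1) * \<tau> powr (p + 1)"
    using \<tau> by (simp add: powr_add distrib_right)
  finally show ?thesis .
qed

lemma cell_integral_phi_le:
  fixes H \<tau> c :: real
  assumes H: "1/2 < H" "H < 1" and \<tau>: "0 < \<tau>"
  shows "\<bar>LBINT v = (real j * \<tau>)..(real (Suc j) * \<tau>).
           (LBINT u = (real i * \<tau>)..(real (Suc i) * \<tau>). c * phi H (u - v))\<bar>
         \<le> \<bar>c\<bar> * (H * (2 * H + 1)) * \<tau> powr (2 * H)"
proof -
  have inner_le: "\<bar>LBINT u = (real i * \<tau>)..(real (Suc i) * \<tau>). c * phi H (u - v)\<bar>
      \<le> \<bar>c\<bar> * (H * (2 * H + 1)) * \<tau> powr (2 * H - 1)" for v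
  proof -
    have kernel: "\<bar>LBINT u = (real i * \<tau>)..(real (Suc i) * \<tau>). \<bar>u - v\<bar> powr (2 * H - 2)\<bar>
        \<le> (2 / (2 * H - 1) + 1) * \<tau> powr (2 * H - 1)"
      using interval_integral_abs_powr_le[of "2 * H - 2" "real i * \<tau>" "real (Suc i) * \<tau>" \<tau> v] H \<tau>
      by (simp add: algebra_simps)
    have "(LBINT u = (real i * \<tau>)..(real (Suc i) * \<tau>). c * phi H (u - v))
        = c * (H * (2 * H - 1)) * (LBINT u = (real i * \<tau>)..(real (Suc i) * \<tau>). \<bar>u - v\<bar> powr (2 * H - 2))"
      by (simp add: phi_def mult.assoc)
    also have "\<bar>\<dots>\<bar> \<le> \<bar>c\<bar> * (H * (2 * H - 1)) * ((2 / (2 * H - 1) + 1) * \<tau> powr (2 * H - 1))"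
      using H kernel by (simp add: abs_mult mult_left_mono)
    also have "\<dots> = \<bar>c\<bar> * (H * (2 * H + 1)) * \<tau> powr (2 * H - 1)"
      using H by (simp add: field_simps)
    finally show ?thesis .
  qed
  have "\<bar>LBINT v = (real j * \<tau>)..(real (Suc j) * \<tau>).
           (LBINT u = (real i * \<tau>)..(real (Suc i) * \<tau>). c * phi H (u - v))\<bar>
        \<le> \<bar>c\<bar> * (H * (2 * H + 1)) * \<tau> powr (2 * H - 1) * (real (Suc j) * \<tau> - real j * \<tau>)"
    using \<tau> by (intro abs_interval_integral_le inner_le) auto
  also have "\<dots> = \<bar>c\<bar> * (H * (2 * H + 1)) * \<tau> powr (2 * H)"
  proof -
    have "\<tau> powr (2 * H - 1) * (real (Suc j) * \<tau> - real j * \<tau>) = \<tau> powr (2 * H)"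
      using \<tau> by (simp add: algebra_simps powr_diff)
    then show ?thesis by (simp only: mult.assoc)
  qed
  finally show ?thesis .
qed

definition basis_comb :: "(nat \<Rightarrow> 'a::real_inner) \<Rightarrow> nat \<Rightarrow> (nat \<Rightarrow> real) \<Rightarrow> 'a" where
  "basis_comb e N c = (\<Sum>k<N. c k *\<^sub>R e k)"

context
  fixes e :: "nat \<Rightarrow> 'a::real_inner"
  assumes ortho: "\<And>i j. inner (e i) (e j) = (if i = j then 1 else 0)"
begin

lemma inner_basis_comb_basis: "inner (basis_comb e N c) (e j) = (if j < N then c j else 0)"
  by (simp add: basis_comb_def inner_sum_left ortho if_distrib[of "\<lambda>x. _ * x"] cong: if_cong)

lemma PN_basis_comb: "PN e N (basis_comb e N c) = basis_comb e N c"
  unfolding PN_def by (simp add: inner_basis_comb_basis) (simp add: basis_comb_def)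

lemma PN_eq_basis_comb: "PN e N x = basis_comb e N (\<lambda>k. inner x (e k))"
  by (simp add: PN_def basis_comb_def)

lemma basis_comb_cong: "(\<And>k. k < N \<Longrightarrow> c k = d k) \<Longrightarrow> basis_comb e N c = basis_comb e N d"
  by (simp add: basis_comb_def)

lemma EN_basis_comb: "EN lam e N t (basis_comb e N c) = basis_comb e N (\<lambda>k. exp (- t * lam k) * c k)"
  unfolding EN_def PN_basis_comb by (simp add: inner_basis_comb_basis) (simp add: basis_comb_def)

lemma RN_basis_comb: "RN lam e N \<tau> (basis_comb e N c) = basis_comb e N (\<lambda>k. c k / (1 + \<tau> * lam k))"
  unfolding RN_def PN_basis_comb by (simp add: inner_basis_comb_basis) (simp add: basis_comb_def)

lemma RN_power_basis_comb:
  "(RN lam e N \<tau> ^^ n) (basis_comb e N c) = basis_comb e N (\<lambda>k. c k / (1 + \<tau> * lam k) ^ n)"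
  by (induction n) (simp_all add: RN_basis_comb field_simps)

lemma AN_pow_basis_comb: "AN_pow lam e N s (basis_comb e N c) = basis_comb e N (\<lambda>k. lam k powr s * c k)"
  unfolding AN_pow_def by (simp add: inner_basis_comb_basis) (simp add: basis_comb_def)

lemma basis_comb_diff: "basis_comb e N c - basis_comb e N d = basis_comb e N (\<lambda>k. c k - d k)"
  by (simp add: basis_comb_def sum_subtractf scaleR_diff_left)

lemma inner_basis_comb: "inner (basis_comb e N c) (basis_comb e N d) = (\<Sum>k<N. c k * d k)"
  by (simp add: basis_comb_def [of e N d] inner_sum_right inner_basis_comb_basis mult.commute)

lemma norm_basis_comb_sq: "(norm (basis_comb e N c))\<^sup>2 = (\<Sum>k<N. (c k)\<^sup>2)"
  by (simp add: power2_norm_eq_inner[symmetric] inner_basis_comb[symmetric] power2_eq_square)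

lemma sum_abs_inner_basis_comb_le:
  "(\<Sum>i\<in>I. \<Sum>j\<in>I. \<bar>inner (basis_comb e N (\<lambda>k. a i k * x k)) (basis_comb e N (\<lambda>k. a j k * x k))\<bar>)
     \<le> (\<Sum>k<N. (x k)\<^sup>2 * (\<Sum>i\<in>I. \<bar>a i k\<bar>)\<^sup>2)"
proof -
  have "(\<Sum>i\<in>I. \<Sum>j\<in>I. \<bar>inner (basis_comb e N (\<lambda>k. a i k * x k)) (basis_comb e N (\<lambda>k. a j k * x k))\<bar>)
      \<le> (\<Sum>i\<in>I. \<Sum>j\<in>I. \<Sum>k<N. (x k)\<^sup>2 * (\<bar>a i k\<bar> * \<bar>a j k\<bar>))"
    unfolding inner_basis_comb
    by (intro sum_mono order.trans[OF sum_abs]) (simp add: abs_mult power2_eq_square mult_ac)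
  also have "\<dots> = (\<Sum>k<N. (x k)\<^sup>2 * (\<Sum>i\<in>I. \<Sum>j\<in>I. \<bar>a i k\<bar> * \<bar>a j k\<bar>))"
    by (simp add: sum_distrib_left sum.swap[of _ "{..<N}"])
  also have "\<dots> = (\<Sum>k<N. (x k)\<^sup>2 * (\<Sum>i\<in>I. \<bar>a i k\<bar>)\<^sup>2)"
    by (simp add: power2_eq_square sum_product)
  finally show ?thesis .
qed

end

lemma norm_AN_pow_PN_sq:
  assumes ortho: "\<And>i j. inner (e i) (e j) = (if i = j then 1 else 0)"
  shows "(norm (AN_pow lam e N (s / 2) (PN e N x)))\<^sup>2 = (\<Sum>k<N. (inner x (e k))\<^sup>2 * lam k powr s)"
proof -
  have "(lam k powr (s / 2) * inner x (e k))\<^sup>2 = (inner x (e k))\<^sup>2 * lam k powr s" for k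
    by (simp add: power_mult_distrib power2_eq_square powr_add[symmetric])
  then show ?thesis
    by (simp add: PN_eq_basis_comb[OF ortho] AN_pow_basis_comb[OF ortho] norm_basis_comb_sq[OF ortho])
qed

text \<open>The scalar error of \<open>n\<close> implicit Euler steps for \<open>y' = - \<lambda> y\<close> with step size \<open>\<tau>\<close>,
  where \<open>z = \<tau> \<lambda>\<close>.\<close>

definition euler_error :: "real \<Rightarrow> nat \<Rightarrow> real" where
  "euler_error z n = exp (- z) ^ n - 1 / (1 + z) ^ n"

lemma TN_PN_eq_basis_comb:
  assumes ortho: "\<And>i j. inner (e i) (e j) = (if i = j then 1 else 0)" and "i \<le> m"
  shows "TN lam e N \<tau> m i (PN e N x)
    = basis_comb e N (\<lambda>k. euler_error (\<tau> * lam k) (m - i) * inner x (e k))"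
proof -
  have "real m * \<tau> - real i * \<tau> = real (m - i) * \<tau>"
    using \<open>i \<le> m\<close> by (simp add: of_nat_diff algebra_simps)
  then have "exp (- (real m * \<tau> - real i * \<tau>) * lam k) = exp (- (\<tau> * lam k)) ^ (m - i)" for k
    by (simp add: exp_of_nat_mult[symmetric] algebra_simps)
  then show ?thesis
    unfolding TN_def PN_eq_basis_comb[OF ortho] EN_basis_comb[OF ortho] RN_power_basis_comb[OF ortho]
      basis_comb_diff[OF ortho] euler_error_def
    by (intro basis_comb_cong[OF ortho]) (simp add: algebra_simps diff_divide_distrib)
qed

lemma sum_power_diff_le:
  fixes q r :: real
  assumes "0 \<le> q" "q \<le> r" "r < 1" and "finite S"
  shows "(\<Sum>n\<in>S. r ^ n - q ^ n) \<le> 1 / (1 - r) - 1 / (1 - q)"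
proof -
  have summable: "summable (\<lambda>n. r ^ n - q ^ n)"
    using assms by (intro summable_diff summable_geometric) auto
  have "(\<Sum>n\<in>S. r ^ n - q ^ n) \<le> (\<Sum>n. r ^ n - q ^ n)"
    using assms by (intro sum_le_suminf summable) (auto intro: power_mono)
  also have "\<dots> = 1 / (1 - r) - 1 / (1 - q)"
    using assms by (simp add: suminf_diff[symmetric] suminf_geometric summable_geometric)
  finally show ?thesis .
qed

text \<open>Since \<open>exp (- z) \<le> 1 / (1 + z)\<close>, the errors have one sign and are dominated by the
  difference of two geometric series, \<open>1 + 1/z - 1 / (1 - exp (- z))\<close>; this is at most
  \<open>min 1 (1/z)\<close> because \<open>1 - z \<le> exp (- z)\<close>.\<close>

lemma sum_abs_euler_error_le:
  assumes z: "0 < z" and "finite S"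
  shows "(\<Sum>n\<in>S. \<bar>euler_error z n\<bar>) \<le> min 1 (1 / z)"
proof -
  define q where "q = exp (- z)"
  define r where "r = 1 / (1 + z)"
  have q: "0 < q" "q < 1" and r: "r < 1" using z by (auto simp: q_def r_def)
  have "1 + z \<le> exp z" by (rule exp_ge_add_one_self)
  then have qr: "q \<le> r" using z by (simp add: q_def r_def exp_minus field_simps)
  have "\<bar>euler_error z n\<bar> = r ^ n - q ^ n" for n
    using power_mono[OF qr, of n] q by (simp add: euler_error_def q_def r_def power_divide)
  then have "(\<Sum>n\<in>S. \<bar>euler_error z n\<bar>) \<le> 1 / (1 - r) - 1 / (1 - q)"
    using sum_power_diff_le[OF _ qr r \<open>finite S\<close>] q by simp
  moreover have "1 / (1 - r) = 1 + 1 / z" using z by (simp add: r_def field_simps)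
  moreover have "1 \<le> 1 / (1 - q)" using q by (simp add: field_simps)
  moreover have "1 / z \<le> 1 / (1 - q)"
  proof -
    have "1 + (- z) \<le> exp (- z)" by (rule exp_ge_add_one_self)
    then show ?thesis using q z by (intro divide_left_mono) (auto simp: q_def)
  qed
  ultimately show ?thesis by linarith
qed

lemma power2_le_powr_if_le_min_inverse:
  fixes z s \<beta> :: real
  assumes z: "0 < z" and s: "0 \<le> s" "s \<le> min 1 (1 / z)" and \<beta>: "-1 \<le> \<beta>" "\<beta> \<le> 1"
  shows "s\<^sup>2 \<le> z powr (\<beta> - 1)"
proof (cases "z \<le> 1")
  case True
  have "s\<^sup>2 \<le> 1" using s by (simp add: power_le_one)
  also have "1 \<le> z powr (\<beta> - 1)"
    using powr_mono2'[of "\<beta> - 1" z 1] True z \<beta> by simp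
  finally show ?thesis .
next
  case False
  have "s\<^sup>2 \<le> (1 / z)\<^sup>2" using s by (intro power_mono) auto
  also have "\<dots> = z powr (- 2)" using z by (simp add: powr_minus_divide power2_eq_square powr_numeral)
  also have "\<dots> \<le> z powr (\<beta> - 1)" using False \<beta> by (intro powr_mono) auto
  finally show ?thesis .
qed

lemma sum_abs_inner_TN_le:
  assumes ortho: "\<And>i j. inner (e i) (e j) = (if i = j then 1 else 0)"
    and lam: "\<And>k. 0 < lam k" and \<tau>: "0 < \<tau>" and \<beta>: "-1 \<le> \<beta>" "\<beta> \<le> 1"
  shows "(\<Sum>i<m. \<Sum>j<m. \<bar>inner (TN lam e N \<tau> m i (PN e N x)) (TN lam e N \<tau> m j (PN e N x))\<bar>)
    \<le> \<tau> powr (\<beta> - 1) * (norm (AN_pow lam e N ((\<beta> - 1) / 2) (PN e N x)))\<^sup>2"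
proof -
  define z where "z k = \<tau> * lam k" for k
  have z: "0 < z k" for k using \<tau> lam by (simp add: z_def)
  define S where "S k = (\<Sum>i<m. \<bar>euler_error (z k) (m - i)\<bar>)" for k
  have S_le: "(S k)\<^sup>2 \<le> z k powr (\<beta> - 1)" for k
  proof -
    have "inj_on (\<lambda>i. m - i) {..<m}" by (auto simp: inj_on_def)
    then have "S k = (\<Sum>n\<in>(\<lambda>i. m - i) ` {..<m}. \<bar>euler_error (z k) n\<bar>)"
      by (simp add: S_def sum.reindex)
    then have "S k \<le> min 1 (1 / z k)" using sum_abs_euler_error_le[OF z] by simp
    then show ?thesis using z \<beta> by (intro power2_le_powr_if_le_min_inverse) (auto simp: S_def)
  qed
  have "(\<Sum>i<m. \<Sum>j<m. \<bar>inner (TN lam e N \<tau> m i (PN e N x)) (TN lam e N \<tau> m j (PN e N x))\<bar>)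
      \<le> (\<Sum>k<N. (inner x (e k))\<^sup>2 * (S k)\<^sup>2)"
    using sum_abs_inner_basis_comb_le[OF ortho, where a = "\<lambda>i k. euler_error (z k) (m - i)" and I = "{..<m}"]
    by (simp add: TN_PN_eq_basis_comb[OF ortho] S_def z_def)
  also have "\<dots> \<le> (\<Sum>k<N. (inner x (e k))\<^sup>2 * (\<tau> powr (\<beta> - 1) * lam k powr (\<beta> - 1)))"
    using S_le \<tau> lam by (intro sum_mono mult_left_mono) (auto simp: z_def powr_mult less_imp_le)
  also have "\<dots> = \<tau> powr (\<beta> - 1) * (norm (AN_pow lam e N ((\<beta> - 1) / 2) (PN e N x)))\<^sup>2"
    unfolding norm_AN_pow_PN_sq[OF ortho] by (simp add: sum_distrib_left mult_ac)
  finally show ?thesis .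
qed

theorem mainTheorem11:
  fixes e :: "nat \<Rightarrow> 'a::{real_inner, complete_space}"
    and lam :: "nat \<Rightarrow> real" and H \<beta> T :: real
  assumes ortho: "\<And>i j. inner (e i) (e j) = (if i = j then 1 else 0)"
    and complete: "\<And>x. (\<lambda>n. \<Sum>k<n. inner x (e k) *\<^sub>R e k) \<longlonglongrightarrow> x"
    and lam_pos: "0 < lam 0"
    and lam_mono: "mono lam"
    and lam_inf: "filterlim lam at_top sequentially"
    and H: "1/2 < H" "H < 1"
    and \<beta>: "1 - 2 * H < \<beta>" "\<beta> \<le> 1"
    and T: "0 < T"
  shows "\<exists>C. \<forall>N M m (x::'a). 0 < M \<and> 1 \<le> m \<and> m \<le> M \<longrightarrow>
    (let \<tau> = T / real M in
      (\<Sum>i<m. \<Sum>j<m.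
         (LBINT v = (real j * \<tau>)..(real (Suc j) * \<tau>).
           (LBINT u = (real i * \<tau>)..(real (Suc i) * \<tau>).
             (inner (TN lam e N \<tau> m i (PN e N x)) (TN lam e N \<tau> m j (PN e N x)) * phi H (u - v)))))
      \<le> C * \<tau> powr (2 * H + \<beta> - 1) * (norm (AN_pow lam e N ((\<beta> - 1) / 2) (PN e N x)))\<^sup>2)"
proof (intro exI allI impI)
  fix N M m :: nat and x :: 'a
  assume "0 < M \<and> 1 \<le> m \<and> m \<le> M"
  define \<tau> where "\<tau> = T / real M"
  have \<tau>: "0 < \<tau>" using \<open>0 < M \<and> 1 \<le> m \<and> m \<le> M\<close> T by (simp add: \<tau>_def)
  have lam: "0 < lam k" for k using lam_pos lam_mono[THEN monoD, of 0 k] by simp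
  define C where "C = H * (2 * H + 1)"
  have "C \<ge> 0" using H by (simp add: C_def)
  let ?G = "\<lambda>i j. inner (TN lam e N \<tau> m i (PN e N x)) (TN lam e N \<tau> m j (PN e N x))"
  have "(\<Sum>i<m. \<Sum>j<m. (LBINT v = (real j * \<tau>)..(real (Suc j) * \<tau>).
           (LBINT u = (real i * \<tau>)..(real (Suc i) * \<tau>). ?G i j * phi H (u - v))))
      \<le> (\<Sum>i<m. \<Sum>j<m. \<bar>?G i j\<bar> * C * \<tau> powr (2 * H))"
    unfolding C_def by (intro sum_mono order_trans[OF abs_ge_self cell_integral_phi_le[OF H \<tau>]])
  also have "\<dots> = C * \<tau> powr (2 * H) * (\<Sum>i<m. \<Sum>j<m. \<bar>?G i j\<bar>)"
    by (simp add: sum_distrib_left mult_ac)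
  also have "\<dots> \<le> C * \<tau> powr (2 * H) * (\<tau> powr (\<beta> - 1) * (norm (AN_pow lam e N ((\<beta> - 1) / 2) (PN e N x)))\<^sup>2)"
    using \<open>C \<ge> 0\<close> \<beta> H by (intro mult_left_mono sum_abs_inner_TN_le[OF ortho lam \<tau>]) auto
  also have "\<dots> = C * \<tau> powr (2 * H + \<beta> - 1) * (norm (AN_pow lam e N ((\<beta> - 1) / 2) (PN e N x)))\<^sup>2"
    by (simp add: powr_add[symmetric] add_diff_eq)
  finally show "let \<tau> = T / real M in
      (\<Sum>i<m. \<Sum>j<m.
         (LBINT v = (real j * \<tau>)..(real (Suc j) * \<tau>).
           (LBINT u = (real i * \<tau>)..(real (Suc i) * \<tau>).
             (inner (TN lam e N \<tau> m i (PN e N x)) (TN lam e N \<tau> m j (PN e N x)) * phi H (u - v)))))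
      \<le> C * \<tau> powr (2 * H + \<beta> - 1) * (norm (AN_pow lam e N ((\<beta> - 1) / 2) (PN e N x)))\<^sup>2"
    by (simp add: \<tau>_def Let_def)
qed

end
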